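(* Let $A_\bullet$ be a simplicial commutative ring, and let $a,b\in N_n(A)$ and $c\in A_{n-1}$. Then: (1) $s_1s_0(c)\,m(a,b)\in N_{n+1}(A)$; (2) if $d_0(a)c=0=d_0(b)c$, then $s_1s_0(c)\,m(a,b)$ is a cycle; (3) if $d_0(a)c=0$ and $b$ is a boundary, then $s_1s_0(c)\,m(a,b)$ is a boundary.
   Context: For a simplicial ring $A_\bullet$ and $a,b\in A_n$ put $m(a,b)=s_0(a)s_1(b)-s_0(b)s_1(a)\in A_{n+1}$. $N_n(A)=\bigcap_{1\le i\le n}\ker(d_i:A_n\to A_{n-1})$ is the normalized chain complex with differential $d_0$; cycles and boundaries refer to this complex. *)

theory Defs
  imports "HOL-Algebra.Ring" "HOL-Algebra.RingHom"
begin

text \<open>A simplicial commutative ring, given levelwise by commutative rings R n (= A_n),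
face maps d n i : A_n -> A_(n-1) (for n >= 1, i <= n) and degeneracy maps
s n i : A_n -> A_(n+1) (for i <= n), all ring homomorphisms, satisfying the
simplicial identities (on carriers).\<close>

definition simplicial_cring ::
  "(nat \<Rightarrow> ('a, 'b) ring_scheme) \<Rightarrow> (nat \<Rightarrow> nat \<Rightarrow> 'a \<Rightarrow> 'a) \<Rightarrow> (nat \<Rightarrow> nat \<Rightarrow> 'a \<Rightarrow> 'a) \<Rightarrow> bool"
where
  "simplicial_cring R d s \<longleftrightarrow>
     (\<forall>n. cring (R n)) \<and>
     (\<forall>n i. i \<le> Suc n \<longrightarrow> d (Suc n) i \<in> ring_hom (R (Suc n)) (R n)) \<and>
     (\<forall>n i. i \<le> n \<longrightarrow> s n i \<in> ring_hom (R n) (R (Suc n))) \<and>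
     \<comment> \<open>d_i d_j = d_(j-1) d_i for i < j\<close>
     (\<forall>n i j x. i < j \<and> j \<le> n + 2 \<and> x \<in> carrier (R (n + 2)) \<longrightarrow>
        d (n + 1) i (d (n + 2) j x) = d (n + 1) (j - 1) (d (n + 2) i x)) \<and>
     \<comment> \<open>d_i s_j = s_(j-1) d_i for i < j\<close>
     (\<forall>n i j x. i < j \<and> j \<le> n + 1 \<and> x \<in> carrier (R (n + 1)) \<longrightarrow>
        d (n + 2) i (s (n + 1) j x) = s n (j - 1) (d (n + 1) i x)) \<and>
     \<comment> \<open>d_j s_j = id = d_(j+1) s_j\<close>
     (\<forall>n j x. j \<le> n \<and> x \<in> carrier (R n) \<longrightarrow>
        d (n + 1) j (s n j x) = x \<and> d (n + 1) (j + 1) (s n j x) = x) \<and>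
     \<comment> \<open>d_i s_j = s_j d_(i-1) for i > j + 1\<close>
     (\<forall>n i j x. j + 1 < i \<and> i \<le> n + 2 \<and> x \<in> carrier (R (n + 1)) \<longrightarrow>
        d (n + 2) i (s (n + 1) j x) = s n j (d (n + 1) (i - 1) x)) \<and>
     \<comment> \<open>s_i s_j = s_(j+1) s_i for i <= j\<close>
     (\<forall>n i j x. i \<le> j \<and> j \<le> n \<and> x \<in> carrier (R n) \<longrightarrow>
        s (n + 1) i (s n j x) = s (n + 1) (j + 1) (s n i x))"

definition normalized ::
  "(nat \<Rightarrow> ('a, 'b) ring_scheme) \<Rightarrow> (nat \<Rightarrow> nat \<Rightarrow> 'a \<Rightarrow> 'a) \<Rightarrow> nat \<Rightarrow> 'a set"
where
  "normalized R d n = {x \<in> carrier (R n). \<forall>i. 1 \<le> i \<and> i \<le> n \<longrightarrow> d n i x = \<zero>\<^bsub>R (n - 1)\<^esub>}"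

definition is_cycle ::
  "(nat \<Rightarrow> ('a, 'b) ring_scheme) \<Rightarrow> (nat \<Rightarrow> nat \<Rightarrow> 'a \<Rightarrow> 'a) \<Rightarrow> nat \<Rightarrow> 'a \<Rightarrow> bool"
where
  "is_cycle R d n x \<longleftrightarrow> x \<in> normalized R d n \<and> (0 < n \<longrightarrow> d n 0 x = \<zero>\<^bsub>R (n - 1)\<^esub>)"

definition is_boundary ::
  "(nat \<Rightarrow> ('a, 'b) ring_scheme) \<Rightarrow> (nat \<Rightarrow> nat \<Rightarrow> 'a \<Rightarrow> 'a) \<Rightarrow> nat \<Rightarrow> 'a \<Rightarrow> bool"
where
  "is_boundary R d n x \<longleftrightarrow> (\<exists>y \<in> normalized R d (Suc n). d (Suc n) 0 y = x)"

definition mprod ::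
  "(nat \<Rightarrow> ('a, 'b) ring_scheme) \<Rightarrow> (nat \<Rightarrow> nat \<Rightarrow> 'a \<Rightarrow> 'a) \<Rightarrow> nat \<Rightarrow> 'a \<Rightarrow> 'a \<Rightarrow> 'a"
where
  "mprod R s n a b =
     (s n 0 a \<otimes>\<^bsub>R (Suc n)\<^esub> s n 1 b) \<ominus>\<^bsub>R (Suc n)\<^esub> (s n 0 b \<otimes>\<^bsub>R (Suc n)\<^esub> s n 1 a)"

end

theory Submission
  imports Defs
begin

(* N(A) is an ideal in each degree, and for normalized x and i > j + 1 the simplicial
   identities give d_i s_j x = s_j d_(i-1) x = 0. Hence d_1 m(a,b) = ab - ba = 0 and
   d_i m(a,b) = 0 for i >= 2, which gives (1). Since d_0 m(a,b) = a s_0(d_0 b) - b s_0(d_0 a)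
   and d_0 s_1 s_0 c = s_0 c, the element d_0 (s_1 s_0 c m(a,b)) equals
   a s_0(c d_0 b) - b s_0(c d_0 a), which gives (2).
   For (3) write b = d_0 y with y in N_(n+1) and put
     w = s_1 s_0 a s_2 y - s_1 y s_2 s_0 a + s_0 y s_2 s_1 a   (mprod_lift n a y).
   Its faces d_1 and d_2 cancel term by term and its higher faces vanish, so w is normalized,
   and d_0 w = m(a,b) + y s_1 s_0 (d_0 a). The correction term is annihilated by s_1 s_0 c
   because c d_0 a = 0, so s_1 s_0 c m(a,b) = d_0 (s_2 s_1 s_0 c w). *)

locale simplicial_comm_ring =
  fixes R :: "nat \<Rightarrow> ('a, 'b) ring_scheme" and d s :: "nat \<Rightarrow> nat \<Rightarrow> 'a \<Rightarrow> 'a"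
  assumes simplicial: "simplicial_cring R d s"
begin

lemma cring_level: "cring (R n)"
  using simplicial by (simp add: simplicial_cring_def)

lemma face_hom: "i \<le> Suc n \<Longrightarrow> d (Suc n) i \<in> ring_hom (R (Suc n)) (R n)"
  using simplicial by (simp add: simplicial_cring_def)

lemma degen_hom: "j \<le> n \<Longrightarrow> s n j \<in> ring_hom (R n) (R (Suc n))"
  using simplicial by (simp add: simplicial_cring_def)

lemma face_closed [simp]:
  "i \<le> Suc n \<Longrightarrow> x \<in> carrier (R (Suc n)) \<Longrightarrow> d (Suc n) i x \<in> carrier (R n)"
  by (rule ring_hom_closed[OF face_hom])

lemma degen_closed [simp]:
  "j \<le> n \<Longrightarrow> x \<in> carrier (R n) \<Longrightarrow> s n j x \<in> carrier (R (Suc n))"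
  by (rule ring_hom_closed[OF degen_hom])

lemma face_mult [simp]:
  "i \<le> Suc n \<Longrightarrow> x \<in> carrier (R (Suc n)) \<Longrightarrow> y \<in> carrier (R (Suc n)) \<Longrightarrow>
   d (Suc n) i (x \<otimes>\<^bsub>R (Suc n)\<^esub> y) = d (Suc n) i x \<otimes>\<^bsub>R n\<^esub> d (Suc n) i y"
  by (rule ring_hom_mult[OF face_hom])

lemma degen_mult [simp]:
  "j \<le> n \<Longrightarrow> x \<in> carrier (R n) \<Longrightarrow> y \<in> carrier (R n) \<Longrightarrow>
   s n j (x \<otimes>\<^bsub>R n\<^esub> y) = s n j x \<otimes>\<^bsub>R (Suc n)\<^esub> s n j y"
  by (rule ring_hom_mult[OF degen_hom])

lemma face_add [simp]:
  "i \<le> Suc n \<Longrightarrow> x \<in> carrier (R (Suc n)) \<Longrightarrow> y \<in> carrier (R (Suc n)) \<Longrightarrow>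
   d (Suc n) i (x \<oplus>\<^bsub>R (Suc n)\<^esub> y) = d (Suc n) i x \<oplus>\<^bsub>R n\<^esub> d (Suc n) i y"
  by (rule ring_hom_add[OF face_hom])

lemma face_minus [simp]:
  assumes "i \<le> Suc n" "x \<in> carrier (R (Suc n))" "y \<in> carrier (R (Suc n))"
  shows "d (Suc n) i (x \<ominus>\<^bsub>R (Suc n)\<^esub> y) = d (Suc n) i x \<ominus>\<^bsub>R n\<^esub> d (Suc n) i y"
proof -
  interpret ring_hom_cring "R (Suc n)" "R n" "d (Suc n) i"
    using assms(1) cring_level face_hom by (simp add: ring_hom_cring_def ring_hom_cring_axioms_def)
  show ?thesis
    using assms(2,3) by (simp add: a_minus_def)
qed

lemma degen_zero [simp]: "j \<le> n \<Longrightarrow> s n j \<zero>\<^bsub>R n\<^esub> = \<zero>\<^bsub>R (Suc n)\<^esub>"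
  by (rule ring_hom_zero[OF degen_hom cring.axioms(1)[OF cring_level] cring.axioms(1)[OF cring_level]])

lemma face_degen_less [simp]:
  "i < j \<Longrightarrow> j \<le> Suc n \<Longrightarrow> x \<in> carrier (R (Suc n)) \<Longrightarrow>
   d (Suc (Suc n)) i (s (Suc n) j x) = s n (j - 1) (d (Suc n) i x)"
  using simplicial unfolding simplicial_cring_def
  by (auto simp: numeral_2_eq_2 dest!: spec[of _ n])

lemma face_degen_same [simp]: "j \<le> n \<Longrightarrow> x \<in> carrier (R n) \<Longrightarrow> d (Suc n) j (s n j x) = x"
  using simplicial unfolding simplicial_cring_def by simp

(* Stated with i = Suc j so that the simplifier also applies it to numeral indices. *)
lemma face_degen_succ [simp]:
  "i = Suc j \<Longrightarrow> j \<le> n \<Longrightarrow> x \<in> carrier (R n) \<Longrightarrow> d (Suc n) i (s n j x) = x"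
  using simplicial unfolding simplicial_cring_def by simp

lemma face_degen_greater [simp]:
  "Suc j < i \<Longrightarrow> i \<le> Suc (Suc n) \<Longrightarrow> x \<in> carrier (R (Suc n)) \<Longrightarrow>
   d (Suc (Suc n)) i (s (Suc n) j x) = s n j (d (Suc n) (i - 1) x)"
  using simplicial unfolding simplicial_cring_def
  by (auto simp: numeral_2_eq_2 dest!: spec[of _ n])

lemma normalized_carrier: "x \<in> normalized R d n \<Longrightarrow> x \<in> carrier (R n)"
  by (simp add: normalized_def)

lemma face_normalized [simp]:
  "x \<in> normalized R d (Suc n) \<Longrightarrow> 0 < i \<Longrightarrow> i \<le> Suc n \<Longrightarrow> d (Suc n) i x = \<zero>\<^bsub>R n\<^esub>"
  by (simp add: normalized_def)

lemma normalizedI: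
  assumes "x \<in> carrier (R (Suc n))" and "\<And>i. 0 < i \<Longrightarrow> i \<le> Suc n \<Longrightarrow> d (Suc n) i x = \<zero>\<^bsub>R n\<^esub>"
  shows "x \<in> normalized R d (Suc n)"
  using assms unfolding normalized_def by auto

lemma normalized_mult_left:
  assumes "x \<in> carrier (R (Suc n))" and "y \<in> normalized R d (Suc n)"
  shows "x \<otimes>\<^bsub>R (Suc n)\<^esub> y \<in> normalized R d (Suc n)"
proof -
  interpret R0: cring "R n" by (rule cring_level)
  interpret R1: cring "R (Suc n)" by (rule cring_level)
  show ?thesis
  proof (rule normalizedI)
    show "x \<otimes>\<^bsub>R (Suc n)\<^esub> y \<in> carrier (R (Suc n))"
      using assms by (simp add: normalized_carrier)
  next
    fix i assume "0 < i" "i \<le> Suc n"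
    with assms show "d (Suc n) i (x \<otimes>\<^bsub>R (Suc n)\<^esub> y) = \<zero>\<^bsub>R n\<^esub>"
      by (simp add: normalized_carrier)
  qed
qed

lemma mprod_closed [simp]:
  assumes "a \<in> carrier (R (Suc n))" "b \<in> carrier (R (Suc n))"
  shows "mprod R s (Suc n) a b \<in> carrier (R (Suc (Suc n)))"
proof -
  interpret R2: cring "R (Suc (Suc n))" by (rule cring_level)
  show ?thesis using assms by (simp add: mprod_def)
qed

lemma mprod_normalized:
  assumes a: "a \<in> normalized R d (Suc n)" and b: "b \<in> normalized R d (Suc n)"
  shows "mprod R s (Suc n) a b \<in> normalized R d (Suc (Suc n))"
proof (rule normalizedI)
  interpret R1: cring "R (Suc n)" by (rule cring_level)
  interpret R2: cring "R (Suc (Suc n))" by (rule cring_level)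
  have [simp]: "a \<in> carrier (R (Suc n))" "b \<in> carrier (R (Suc n))"
    using a b by (simp_all add: normalized_carrier)
  show "mprod R s (Suc n) a b \<in> carrier (R (Suc (Suc n)))" by simp
  fix i assume i: "0 < i" "i \<le> Suc (Suc n)"
  show "d (Suc (Suc n)) i (mprod R s (Suc n) a b) = \<zero>\<^bsub>R (Suc n)\<^esub>"
  proof (cases "i = 1")
    case True
    then show ?thesis by (simp add: mprod_def R1.m_comm R1.minus_eq R1.r_neg)
  next
    case False
    with i a b show ?thesis by (simp add: mprod_def R1.minus_eq)
  qed
qed

lemma face0_mprod:
  assumes "a \<in> carrier (R (Suc n))" "b \<in> carrier (R (Suc n))"
  shows "d (Suc (Suc n)) 0 (mprod R s (Suc n) a b) =
    a \<otimes>\<^bsub>R (Suc n)\<^esub> s n 0 (d (Suc n) 0 b) \<ominus>\<^bsub>R (Suc n)\<^esub> b \<otimes>\<^bsub>R (Suc n)\<^esub> s n 0 (d (Suc n) 0 a)"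
proof -
  interpret R2: cring "R (Suc (Suc n))" by (rule cring_level)
  show ?thesis using assms by (simp add: mprod_def)
qed

lemma degen_mprod_normalized:
  assumes "a \<in> normalized R d (Suc n)" "b \<in> normalized R d (Suc n)" "c \<in> carrier (R n)"
  shows "s (Suc n) 1 (s n 0 c) \<otimes>\<^bsub>R (Suc (Suc n))\<^esub> mprod R s (Suc n) a b \<in> normalized R d (Suc (Suc n))"
  using assms by (simp add: normalized_mult_left mprod_normalized)

lemma degen_mprod_is_cycle:
  assumes a: "a \<in> normalized R d (Suc n)" and b: "b \<in> normalized R d (Suc n)"
    and c: "c \<in> carrier (R n)"
    and ac: "d (Suc n) 0 a \<otimes>\<^bsub>R n\<^esub> c = \<zero>\<^bsub>R n\<^esub>"
    and bc: "d (Suc n) 0 b \<otimes>\<^bsub>R n\<^esub> c = \<zero>\<^bsub>R n\<^esub>"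
  shows "is_cycle R d (Suc (Suc n)) (s (Suc n) 1 (s n 0 c) \<otimes>\<^bsub>R (Suc (Suc n))\<^esub> mprod R s (Suc n) a b)"
proof -
  interpret R0: cring "R n" by (rule cring_level)
  interpret R1: cring "R (Suc n)" by (rule cring_level)
  have [simp]: "a \<in> carrier (R (Suc n))" "b \<in> carrier (R (Suc n))"
    using a b by (simp_all add: normalized_carrier)
  have annihilates: "s n 0 c \<otimes>\<^bsub>R (Suc n)\<^esub> s n 0 (d (Suc n) 0 x) = \<zero>\<^bsub>R (Suc n)\<^esub>"
    if "x \<in> carrier (R (Suc n))" "d (Suc n) 0 x \<otimes>\<^bsub>R n\<^esub> c = \<zero>\<^bsub>R n\<^esub>" for x
    using that c by (simp flip: degen_mult add: R0.m_comm)
  have "d (Suc (Suc n)) 0 (s (Suc n) 1 (s n 0 c) \<otimes>\<^bsub>R (Suc (Suc n))\<^esub> mprod R s (Suc n) a b) =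
    \<zero>\<^bsub>R (Suc n)\<^esub>"
    using annihilates ac bc c
    by (simp add: face0_mprod R1.minus_eq R1.r_distr R1.r_minus R1.m_lcomm[of "s n 0 c"])
  with degen_mprod_normalized[OF a b c] show ?thesis by (simp add: is_cycle_def)
qed

definition mprod_lift :: "nat \<Rightarrow> 'a \<Rightarrow> 'a \<Rightarrow> 'a" where
  "mprod_lift n a y =
    (s (Suc n) 1 (s n 0 a) \<otimes>\<^bsub>R (Suc (Suc n))\<^esub> s (Suc n) 2 y
      \<ominus>\<^bsub>R (Suc (Suc n))\<^esub> s (Suc n) 1 y \<otimes>\<^bsub>R (Suc (Suc n))\<^esub> s (Suc n) 2 (s n 0 a))
    \<oplus>\<^bsub>R (Suc (Suc n))\<^esub> s (Suc n) 0 y \<otimes>\<^bsub>R (Suc (Suc n))\<^esub> s (Suc n) 2 (s n 1 a)"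

lemma mprod_lift_closed [simp]:
  assumes "a \<in> carrier (R (Suc n))" "y \<in> carrier (R (Suc (Suc n)))"
  shows "mprod_lift (Suc n) a y \<in> carrier (R (Suc (Suc (Suc n))))"
proof -
  interpret R3: cring "R (Suc (Suc (Suc n)))" by (rule cring_level)
  show ?thesis using assms by (simp add: mprod_lift_def)
qed

lemma mprod_lift_normalized:
  assumes a: "a \<in> normalized R d (Suc n)" and y: "y \<in> normalized R d (Suc (Suc n))"
  shows "mprod_lift (Suc n) a y \<in> normalized R d (Suc (Suc (Suc n)))"
proof (rule normalizedI)
  interpret R2: cring "R (Suc (Suc n))" by (rule cring_level)
  interpret R3: cring "R (Suc (Suc (Suc n)))" by (rule cring_level)
  have [simp]: "a \<in> carrier (R (Suc n))" "y \<in> carrier (R (Suc (Suc n)))"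
    using a y by (simp_all add: normalized_carrier)
  show "mprod_lift (Suc n) a y \<in> carrier (R (Suc (Suc (Suc n))))"
    by simp
  fix i assume "0 < i" and i_le: "i \<le> Suc (Suc (Suc n))"
  then consider "i = 1" | "i = 2" | j where "i = Suc (Suc (Suc j))"
    by (metis One_nat_def Suc_1 gr0_conv_Suc not0_implies_Suc)
  then show "d (Suc (Suc (Suc n))) i (mprod_lift (Suc n) a y) = \<zero>\<^bsub>R (Suc (Suc n))\<^esub>"
  proof cases
    case 1
    with a y show ?thesis by (simp add: mprod_lift_def R2.minus_eq R2.a_assoc R2.l_neg)
  next
    case 2
    with a y show ?thesis by (simp add: mprod_lift_def R2.minus_eq R2.m_comm R2.r_neg)
  next
    case 3
    with a y i_le show ?thesis by (simp add: mprod_lift_def R2.minus_eq)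
  qed
qed

lemma face0_mprod_lift:
  assumes "a \<in> carrier (R (Suc n))" "y \<in> carrier (R (Suc (Suc n)))"
  shows "d (Suc (Suc (Suc n))) 0 (mprod_lift (Suc n) a y) =
    mprod R s (Suc n) a (d (Suc (Suc n)) 0 y)
      \<oplus>\<^bsub>R (Suc (Suc n))\<^esub> y \<otimes>\<^bsub>R (Suc (Suc n))\<^esub> s (Suc n) 1 (s n 0 (d (Suc n) 0 a))"
proof -
  interpret R3: cring "R (Suc (Suc (Suc n)))" by (rule cring_level)
  show ?thesis using assms by (simp add: mprod_lift_def mprod_def)
qed

lemma degen_mprod_is_boundary:
  assumes a: "a \<in> normalized R d (Suc n)" and c: "c \<in> carrier (R n)"
    and ac: "d (Suc n) 0 a \<otimes>\<^bsub>R n\<^esub> c = \<zero>\<^bsub>R n\<^esub>"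
    and b: "is_boundary R d (Suc n) b"
  shows "is_boundary R d (Suc (Suc n)) (s (Suc n) 1 (s n 0 c) \<otimes>\<^bsub>R (Suc (Suc n))\<^esub> mprod R s (Suc n) a b)"
proof -
  interpret R0: cring "R n" by (rule cring_level)
  interpret R2: cring "R (Suc (Suc n))" by (rule cring_level)
  interpret R3: cring "R (Suc (Suc (Suc n)))" by (rule cring_level)
  obtain y where y: "y \<in> normalized R d (Suc (Suc n))" and yb: "d (Suc (Suc n)) 0 y = b"
    using b unfolding is_boundary_def by blast
  have [simp]: "a \<in> carrier (R (Suc n))" "y \<in> carrier (R (Suc (Suc n)))"
    using a y by (simp_all add: normalized_carrier)
  then have [simp]: "b \<in> carrier (R (Suc n))"
    unfolding yb[symmetric] by simp
  let ?C = "s (Suc n) 1 (s n 0 c)"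
  have "?C \<otimes>\<^bsub>R (Suc (Suc n))\<^esub> s (Suc n) 1 (s n 0 (d (Suc n) 0 a)) = \<zero>\<^bsub>R (Suc (Suc n))\<^esub>"
    using ac c by (simp flip: degen_mult add: R0.m_comm)
  then have "d (Suc (Suc (Suc n))) 0 (s (Suc (Suc n)) 2 ?C \<otimes>\<^bsub>R (Suc (Suc (Suc n)))\<^esub> mprod_lift (Suc n) a y) =
    ?C \<otimes>\<^bsub>R (Suc (Suc n))\<^esub> mprod R s (Suc n) a b"
    using c yb by (simp add: face0_mprod_lift R2.r_distr R2.m_lcomm[of _ y])
  moreover have "s (Suc (Suc n)) 2 ?C \<otimes>\<^bsub>R (Suc (Suc (Suc n)))\<^esub> mprod_lift (Suc n) a y
    \<in> normalized R d (Suc (Suc (Suc n)))"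
    using a y c by (simp add: normalized_mult_left mprod_lift_normalized)
  ultimately show ?thesis unfolding is_boundary_def by blast
qed

end

theorem lemma3p2:
  fixes R :: "nat \<Rightarrow> ('a, 'b) ring_scheme"
    and d s :: "nat \<Rightarrow> nat \<Rightarrow> 'a \<Rightarrow> 'a"
    and n :: nat and a b c :: 'a
  assumes "simplicial_cring R d s"
    and "1 \<le> n"
    and "a \<in> normalized R d n" and "b \<in> normalized R d n"
    and "c \<in> carrier (R (n - 1))"
  shows "s n 1 (s (n - 1) 0 c) \<otimes>\<^bsub>R (Suc n)\<^esub> mprod R s n a b \<in> normalized R d (Suc n) \<and>
         (d n 0 a \<otimes>\<^bsub>R (n - 1)\<^esub> c = \<zero>\<^bsub>R (n - 1)\<^esub> \<longrightarrow>
         d n 0 b \<otimes>\<^bsub>R (n - 1)\<^esub> c = \<zero>\<^bsub>R (n - 1)\<^esub> \<longrightarrow>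
         is_cycle R d (Suc n) (s n 1 (s (n - 1) 0 c) \<otimes>\<^bsub>R (Suc n)\<^esub> mprod R s n a b)) \<and>
         (d n 0 a \<otimes>\<^bsub>R (n - 1)\<^esub> c = \<zero>\<^bsub>R (n - 1)\<^esub> \<longrightarrow>
         is_boundary R d n b \<longrightarrow>
         is_boundary R d (Suc n) (s n 1 (s (n - 1) 0 c) \<otimes>\<^bsub>R (Suc n)\<^esub> mprod R s n a b))"
proof -
  interpret simplicial_comm_ring R d s by (rule simplicial_comm_ring.intro) fact
  obtain k where n: "n = Suc k" using \<open>1 \<le> n\<close> by (cases n) auto
  show ?thesis
    using assms(3-5) unfolding n diff_Suc_1
    by (blast intro: degen_mprod_normalized degen_mprod_is_cycle degen_mprod_is_boundary)
qed

end
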